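(* Let $m \ge 2$ and let $S_1,\dots,S_m$ be mutually independent nonnegative random variables (the ranking scores), each having a probability density function on $[0,\infty)$ and a finite first moment. For each $j$, let $r_j \in \{1,\dots,m\}$ be the rank of $S_j$ among $S_1,\dots,S_m$ in decreasing order, i.e. $r_j = 1 + \#\{\ell \ne j : S_\ell > S_j\}$ (ties occur with probability zero). Then for any $i \in \{1,\dots,m-1\}$ and any $k \in \{1,\dots,m-1\}$ with $\mathrm{P}(r_i = k) > 0$ and $\mathrm{P}(r_i = k+1) > 0$, $$\mathbb{E}[S_i \mid r_i = k] \ \ge\ \mathbb{E}[S_i \mid r_i = k+1].$$ *)

theory Defs
  imports "HOL-Probability.Probability"
begin

definition rank :: "nat \<Rightarrow> (nat \<Rightarrow> 'a \<Rightarrow> real) \<Rightarrow> nat \<Rightarrow> 'a \<Rightarrow> nat" where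
  "rank m S j \<omega> = 1 + card {l \<in> {1..m}. l \<noteq> j \<and> S l \<omega> > S j \<omega>}"

definition cond_exp_event :: "'a measure \<Rightarrow> ('a \<Rightarrow> real) \<Rightarrow> 'a set \<Rightarrow> real" where
  "cond_exp_event M X A = (LINT x:A|M. X x) / measure M A"

end

theory Submission
  imports Defs
begin

text \<open>Given \<open>S\<^sub>i = s\<close>, the rank of \<open>S\<^sub>i\<close> is \<open>n + 1\<close> exactly when \<open>n\<close> of the other
  scores exceed \<open>s\<close>. By independence this has probability \<open>G\<^sub>n(s)\<close>, a Poisson-binomial
  probability with success probabilities \<open>P(S\<^sub>l > s)\<close>, which decrease in \<open>s\<close>. Poisson-binomial
  probabilities are totally positive of order two in their parameters, so
  \<open>G\<^sub>n\<^sub>+\<^sub>1(s) G\<^sub>n(s') \<le> G\<^sub>n(s) G\<^sub>n\<^sub>+\<^sub>1(s')\<close> for \<open>s' \<le> s\<close>. Since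
  \<open>E[S\<^sub>i | r\<^sub>i = n + 1] = E[S\<^sub>i G\<^sub>n(S\<^sub>i)] / E[G\<^sub>n(S\<^sub>i)]\<close>, the claim follows from a
  Chebyshev-type inequality: \<open>(X x - X y)(G\<^sub>n(X x) G\<^sub>n\<^sub>+\<^sub>1(X y) - G\<^sub>n\<^sub>+\<^sub>1(X x) G\<^sub>n(X y)) \<ge> 0\<close>
  integrated over independent copies.\<close>

text \<open>Integer-indexed so that the recursion may use \<open>j - 1\<close> freely; the value at negative
  indices is \<open>0\<close>.\<close>
fun poisson_binomial :: "real list \<Rightarrow> int \<Rightarrow> real" where
  "poisson_binomial [] j = (if j = 0 then 1 else 0)"
| "poisson_binomial (p # ps) j = p * poisson_binomial ps (j - 1) + (1 - p) * poisson_binomial ps j"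

lemma poisson_binomial_exchange:
  fixes q p :: "'b \<Rightarrow> real"
  assumes "\<forall>x\<in>set xs. 0 \<le> q x \<and> q x \<le> p x \<and> p x \<le> 1"
    and "a + b = a' + b'" "a \<le> a'" "b \<le> a'"
  shows "poisson_binomial (map q xs) a' * poisson_binomial (map p xs) b'
           \<le> poisson_binomial (map q xs) a * poisson_binomial (map p xs) b"
  using assms
proof (induction xs arbitrary: a b a' b')
  case Nil
  then show ?case by auto
next
  case (Cons x xs)
  define H where "H a b = poisson_binomial (map q xs) a * poisson_binomial (map p xs) b" for a b
  have IH: "H a' b' \<le> H a b" if "a + b = a' + b'" "a \<le> a'" "b \<le> a'" for a b a' b'
    using Cons that unfolding H_def by auto
  define qx px where "qx = q x" and "px = p x"
  have qp: "0 \<le> qx" "qx \<le> px" "px \<le> 1" using Cons.prems by (auto simp: qx_def px_def)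
  have expand: "poisson_binomial (map q (x # xs)) a * poisson_binomial (map p (x # xs)) b =
     qx*px * H (a-1) (b-1) + qx*(1-px) * H (a-1) b + (1-qx)*px * H a (b-1) + (1-qx)*(1-px) * H a b"
    for a b
    by (simp add: H_def qx_def px_def algebra_simps)
  show ?case
  proof (cases "a' = a")
    case True
    then show ?thesis using Cons.prems by simp
  next
    case False
    then have "a < a'" using Cons.prems by simp
    have c1: "(1-qx)*(1-px) * H a' b' \<le> (1-qx)*(1-px) * H a b"
      using IH[of a b a' b'] Cons.prems qp by (intro mult_left_mono) auto
    have c2: "qx*px * H (a'-1) (b'-1) \<le> qx*px * H (a-1) (b-1)"
      using IH[of "a-1" "b-1" "a'-1" "b'-1"] Cons.prems qp by (intro mult_left_mono) auto
    have c3: "qx*(1-px) * H a' (b'-1) \<le> qx*(1-px) * H (a-1) b"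
      using IH[of "a-1" b a' "b'-1"] Cons.prems qp by (intro mult_left_mono) auto
    have c4: "(1-qx)*px * H (a'-1) b' \<le> (1-qx)*px * H a (b-1)"
      using IH[of a "b-1" "a'-1" b'] Cons.prems \<open>a < a'\<close> qp by (intro mult_left_mono) auto
    \<comment> \<open>The mixed terms are matched via \<open>(1 - qx) px = qx (1 - px) + (px - qx)\<close>.\<close>
    have c5: "(px-qx) * H a' (b'-1) \<le> (px-qx) * H (a'-1) b'"
      using IH[of "a'-1" b' a' "b'-1"] Cons.prems qp by (intro mult_left_mono) auto
    show ?thesis using c1 c2 c3 c4 c5 unfolding expand by (simp add: algebra_simps)
  qed
qed

lemma measurable_card_less[measurable (raw)]:
  fixes f :: "'a \<Rightarrow> real" and g :: "'i \<Rightarrow> 'a \<Rightarrow> real"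
  assumes "finite L" and [measurable]: "f \<in> borel_measurable N" "\<And>l. l \<in> L \<Longrightarrow> g l \<in> borel_measurable N"
  shows "(\<lambda>x. card {l\<in>L. f x < g l x}) \<in> measurable N (count_space UNIV)"
proof -
  have "(\<lambda>x. \<Sum>l\<in>L. if f x < g l x then 1 else (0::nat)) \<in> measurable N (count_space UNIV)"
    by measurable
  moreover have "(\<lambda>x. card {l\<in>L. f x < g l x}) = (\<lambda>x. \<Sum>l\<in>L. if f x < g l x then 1 else (0::nat))"
    using assms by (auto simp: sum.If_cases Int_def)
  ultimately show ?thesis by simp
qed

text \<open>\<open>indep_var\<close> relates variables with values in one type, so the count is cast to \<open>real\<close>.\<close>
lemma (in prob_space) indep_var_card_less:
  fixes S :: "'i \<Rightarrow> 'a \<Rightarrow> real"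
  assumes ind: "indep_vars (\<lambda>_. borel) S I" and "a \<in> I" "L \<subseteq> I" "a \<notin> L" "finite L"
  shows "indep_var borel (S a) borel (\<lambda>\<omega>. real (card {l\<in>L. s < S l \<omega>}))"
proof -
  have "indep_var borel ((\<lambda>f. f a) \<circ> (\<lambda>\<omega>. restrict (\<lambda>l. S l \<omega>) {a}))
      borel ((\<lambda>f. real (card {l\<in>L. s < f l})) \<circ> (\<lambda>\<omega>. restrict (\<lambda>l. S l \<omega>) L))"
    using assms by (intro indep_var_compose[OF indep_var_restrict[OF ind]]) auto
  moreover have "(\<lambda>f. real (card {l\<in>L. s < f l})) \<circ> (\<lambda>\<omega>. restrict (\<lambda>l. S l \<omega>) L)
      = (\<lambda>\<omega>. real (card {l\<in>L. s < S l \<omega>}))"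
    by (auto intro!: arg_cong[where f = card])
  ultimately show ?thesis by (simp add: comp_def)
qed

lemma (in prob_space) prob_card_less_eq_poisson_binomial:
  fixes S :: "'i \<Rightarrow> 'a \<Rightarrow> real"
  assumes ind: "indep_vars (\<lambda>_. borel) S I" and "distinct ys" "set ys \<subseteq> I"
  shows "prob {\<omega>\<in>space M. int (card {l\<in>set ys. s < S l \<omega>}) = j}
           = poisson_binomial (map (\<lambda>l. prob {\<omega>\<in>space M. s < S l \<omega>}) ys) j"
  using assms(2,3)
proof (induction ys arbitrary: j)
  case Nil
  then show ?case by (cases "j = 0") (simp_all add: prob_space)
next
  case (Cons a ys)
  let ?C = "\<lambda>\<omega>. card {l\<in>set ys. s < S l \<omega>}"
  let ?E = "\<lambda>A B. (\<lambda>\<omega>. (S a \<omega>, real (?C \<omega>))) -` (A \<times> B) \<inter> space M"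
  have indep: "indep_var borel (S a) borel (\<lambda>\<omega>. real (?C \<omega>))"
    using Cons.prems by (intro indep_var_card_less[OF ind]) auto
  have [measurable]: "S a \<in> borel_measurable M" "(\<lambda>\<omega>. real (?C \<omega>)) \<in> borel_measurable M"
    using indep_var_rv1[OF indep] indep_var_rv2[OF indep] by auto
  have events: "?E A B \<in> events" if "A \<in> sets borel" "B \<in> sets borel" for A B
    using that by (intro measurable_sets[OF measurable_Pair]) auto
  have real_eq_of_int: "real n = of_int k \<longleftrightarrow> int n = k" for n k
    by (metis of_int_eq_iff of_int_of_nat_eq)
  have split: "{\<omega>\<in>space M. int (card {l\<in>set (a # ys). s < S l \<omega>}) = j}
      = ?E {s<..} {of_int (j - 1)} \<union> ?E {..s} {of_int j}"
  proof -
    have "{l\<in>set (a # ys). s < S l \<omega>}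
        = (if s < S a \<omega> then insert a {l\<in>set ys. s < S l \<omega>} else {l\<in>set ys. s < S l \<omega>})" for \<omega>
      by auto
    then have "card {l\<in>set (a # ys). s < S l \<omega>} = (if s < S a \<omega> then Suc (?C \<omega>) else ?C \<omega>)" for \<omega>
      using Cons.prems by auto
    then show ?thesis by (auto simp: real_eq_of_int)
  qed
  have "prob {\<omega>\<in>space M. int (card {l\<in>set (a # ys). s < S l \<omega>}) = j}
      = prob (?E {s<..} {of_int (j - 1)}) + prob (?E {..s} {of_int j})"
    unfolding split by (intro finite_measure_Union events) auto
  also have "\<dots> = prob (S a -` {s<..} \<inter> space M) * prob ((\<lambda>\<omega>. real (?C \<omega>)) -` {of_int (j - 1)} \<inter> space M)
      + prob (S a -` {..s} \<inter> space M) * prob ((\<lambda>\<omega>. real (?C \<omega>)) -` {of_int j} \<inter> space M)"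
    using indep_varD[OF indep] by simp
  also have "\<dots> = prob {\<omega>\<in>space M. s < S a \<omega>} * prob {\<omega>\<in>space M. int (?C \<omega>) = j - 1}
      + prob {\<omega>\<in>space M. S a \<omega> \<le> s} * prob {\<omega>\<in>space M. int (?C \<omega>) = j}"
    by (simp add: vimage_def Int_def conj_commute real_eq_of_int del: of_int_diff)
  also have "prob {\<omega>\<in>space M. S a \<omega> \<le> s} = 1 - prob {\<omega>\<in>space M. s < S a \<omega>}"
    by (subst prob_compl[symmetric]) (auto intro!: arg_cong[where f = prob])
  finally show ?case using Cons by simp
qed

lemma (in prob_space) integral_indep_var_eq_iterated:
  fixes F :: "'b \<times> 'b \<Rightarrow> real"
  assumes indep: "indep_var N1 X N2 Y" and [measurable]: "F \<in> borel_measurable (N1 \<Otimes>\<^sub>M N2)"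
    and int: "integrable M (\<lambda>\<omega>. F (X \<omega>, Y \<omega>))"
  shows "(\<integral>\<omega>. F (X \<omega>, Y \<omega>) \<partial>M) = (\<integral>\<omega>. (\<integral>y. F (X \<omega>, y) \<partial>distr M N2 Y) \<partial>M)"
proof -
  let ?\<mu> = "distr M N1 X" and ?\<nu> = "distr M N2 Y"
  have [measurable]: "X \<in> measurable M N1" "Y \<in> measurable M N2"
    using indep_var_rv1[OF indep] indep_var_rv2[OF indep] by auto
  have joint: "?\<mu> \<Otimes>\<^sub>M ?\<nu> = distr M (N1 \<Otimes>\<^sub>M N2) (\<lambda>\<omega>. (X \<omega>, Y \<omega>))"
    using indep_var_distribution_eq[THEN iffD1, OF indep] by simp
  interpret \<mu>: prob_space ?\<mu> by (rule prob_space_distr) simp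
  interpret \<nu>: prob_space ?\<nu> by (rule prob_space_distr) simp
  interpret pair_prob_space ?\<mu> ?\<nu> ..
  have "integrable (?\<mu> \<Otimes>\<^sub>M ?\<nu>) F"
    unfolding joint using int by (subst integrable_distr_eq) auto
  then have "(\<integral>z. F z \<partial>(?\<mu> \<Otimes>\<^sub>M ?\<nu>)) = (\<integral>x. (\<integral>y. F (x, y) \<partial>?\<nu>) \<partial>?\<mu>)"
    by (rule integral_fst'[symmetric])
  moreover have "(\<integral>\<omega>. F (X \<omega>, Y \<omega>) \<partial>M) = (\<integral>z. F z \<partial>(?\<mu> \<Otimes>\<^sub>M ?\<nu>))"
    unfolding joint by (subst integral_distr) auto
  moreover have "(\<integral>x. (\<integral>y. F (x, y) \<partial>?\<nu>) \<partial>?\<mu>) = (\<integral>\<omega>. (\<integral>y. F (X \<omega>, y) \<partial>?\<nu>) \<partial>M)"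
    by (subst integral_distr) auto
  ultimately show ?thesis by simp
qed

lemma (in prob_space) chebyshev_TP2:
  fixes X g0 g1 :: "'a \<Rightarrow> real"
  assumes X: "integrable M X" and [measurable]: "g0 \<in> borel_measurable M" "g1 \<in> borel_measurable M"
    and bounded: "\<And>x. x \<in> space M \<Longrightarrow> \<bar>g0 x\<bar> \<le> 1" "\<And>x. x \<in> space M \<Longrightarrow> \<bar>g1 x\<bar> \<le> 1"
    and TP2: "\<And>x y. x \<in> space M \<Longrightarrow> y \<in> space M \<Longrightarrow> X y \<le> X x \<Longrightarrow> g1 x * g0 y \<le> g0 x * g1 y"
  shows "(\<integral>x. X x * g1 x \<partial>M) * (\<integral>x. g0 x \<partial>M) \<le> (\<integral>x. X x * g0 x \<partial>M) * (\<integral>x. g1 x \<partial>M)"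
proof -
  have [measurable]: "X \<in> borel_measurable M" using X by simp
  have int_g: "integrable M g0" "integrable M g1"
    using bounded by (auto intro!: integrable_const_bound[where B = 1])
  have int_Xg: "integrable M (\<lambda>x. X x * g0 x)" "integrable M (\<lambda>x. X x * g1 x)"
    using bounded
    by (auto intro!: Bochner_Integration.integrable_bound[OF X] AE_I2 mult_left_le simp: abs_mult)
  define E0 E1 A0 A1 where "E0 = (\<integral>x. g0 x \<partial>M)" and "E1 = (\<integral>x. g1 x \<partial>M)"
    and "A0 = (\<integral>x. X x * g0 x \<partial>M)" and "A1 = (\<integral>x. X x * g1 x \<partial>M)"
  have inner: "(\<integral>y. (X x - X y) * (g0 x * g1 y - g1 x * g0 y) \<partial>M)
      = X x * g0 x * E1 - X x * g1 x * E0 - g0 x * A1 + g1 x * A0" for x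
  proof -
    have "(\<lambda>y. (X x - X y) * (g0 x * g1 y - g1 x * g0 y))
        = (\<lambda>y. (X x * g0 x) * g1 y - (X x * g1 x) * g0 y - g0 x * (X y * g1 y) + g1 x * (X y * g0 y))"
      by (auto simp: algebra_simps)
    then show ?thesis
      using int_g int_Xg by (simp add: E0_def E1_def A0_def A1_def)
  qed
  have "0 \<le> (\<integral>x. (\<integral>y. (X x - X y) * (g0 x * g1 y - g1 x * g0 y) \<partial>M) \<partial>M)"
  proof (intro Bochner_Integration.integral_nonneg)
    fix x y assume xy: "x \<in> space M" "y \<in> space M"
    show "0 \<le> (X x - X y) * (g0 x * g1 y - g1 x * g0 y)"
      using TP2[OF xy] TP2[OF xy(2,1)]
      by (cases "X y \<le> X x") (auto simp: mult.commute intro: mult_nonneg_nonneg mult_nonpos_nonpos)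
  qed
  also have "\<dots> = 2 * (A0 * E1 - A1 * E0)"
    unfolding inner using int_g int_Xg
    by (simp add: E0_def[symmetric] E1_def[symmetric] A0_def[symmetric] A1_def[symmetric])
  finally show ?thesis by (simp add: E0_def E1_def A0_def A1_def)
qed

definition prob_count_exceeding :: "'a measure \<Rightarrow> ('i \<Rightarrow> 'a \<Rightarrow> real) \<Rightarrow> 'i set \<Rightarrow> nat \<Rightarrow> real \<Rightarrow> real" where
  "prob_count_exceeding M S L n s = measure M {\<omega>\<in>space M. card {l\<in>L. s < S l \<omega>} = n}"

lemma (in prob_space) prob_count_exceeding_eq_integral:
  assumes "finite L" and [measurable]: "\<And>l. l \<in> L \<Longrightarrow> S l \<in> borel_measurable M"
  shows "prob_count_exceeding M S L n s =
    (\<integral>y. (if card {l\<in>L. s < y l} = n then 1 else 0) \<partial>distr M (PiM L (\<lambda>_. borel)) (\<lambda>\<omega>. restrict (\<lambda>l. S l \<omega>) L))"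
proof -
  let ?N = "PiM L (\<lambda>_. borel :: real measure)" and ?V = "\<lambda>\<omega>. restrict (\<lambda>l. S l \<omega>) L"
  let ?A = "{y\<in>space ?N. card {l\<in>L. s < y l} = n}"
  have [measurable]: "?V \<in> measurable M ?N" by measurable
  have [measurable]: "?A \<in> sets ?N" using assms(1) by measurable
  have "(\<integral>y. (if card {l\<in>L. s < y l} = n then 1 else 0) \<partial>distr M ?N ?V) = (\<integral>y. indicator ?A y \<partial>distr M ?N ?V)"
    by (intro Bochner_Integration.integral_cong) (auto split: split_indicator)
  also have "\<dots> = prob (?V -` ?A \<inter> space M)"
    by (simp add: measure_distr Int_absorb2 sets.sets_into_space)
  also have "?V -` ?A \<inter> space M = {\<omega>\<in>space M. card {l\<in>L. s < S l \<omega>} = n}"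
  proof -
    have "{l\<in>L. s < restrict (\<lambda>l. S l \<omega>) L l} = {l\<in>L. s < S l \<omega>}" for \<omega> by auto
    then show ?thesis by (auto simp: space_PiM simp del: restrict_apply)
  qed
  finally show ?thesis unfolding prob_count_exceeding_def ..
qed

lemma (in prob_space) borel_measurable_prob_count_exceeding:
  assumes "finite L" and [measurable]: "\<And>l. l \<in> L \<Longrightarrow> S l \<in> borel_measurable M"
  shows "prob_count_exceeding M S L n \<in> borel_measurable borel"
proof -
  let ?\<nu> = "distr M (PiM L (\<lambda>_. borel)) (\<lambda>\<omega>. restrict (\<lambda>l. S l \<omega>) L)"
  interpret \<nu>: prob_space ?\<nu> by (rule prob_space_distr) measurable
  have eq: "prob_count_exceeding M S L n = (\<lambda>s. \<integral>y. (if card {l\<in>L. s < y l} = n then 1 else 0) \<partial>?\<nu>)"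
    by (intro ext prob_count_exceeding_eq_integral assms)
  show ?thesis unfolding eq using assms(1) by measurable
qed

lemma (in prob_space) prob_count_exceeding_TP2:
  assumes ind: "indep_vars (\<lambda>_. borel) S I" and "L \<subseteq> I" "finite L" "s' \<le> s"
  shows "prob_count_exceeding M S L (Suc n) s * prob_count_exceeding M S L n s'
           \<le> prob_count_exceeding M S L n s * prob_count_exceeding M S L (Suc n) s'"
proof -
  obtain ls where ls: "distinct ls" "set ls = L" using \<open>finite L\<close> finite_distinct_list by blast
  let ?q = "\<lambda>l. prob {\<omega>\<in>space M. s < S l \<omega>}" and ?p = "\<lambda>l. prob {\<omega>\<in>space M. s' < S l \<omega>}"
  have pb: "prob_count_exceeding M S L n t = poisson_binomial (map (\<lambda>l. prob {\<omega>\<in>space M. t < S l \<omega>}) ls) (int n)"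
    for n t
    unfolding prob_count_exceeding_def
    using prob_card_less_eq_poisson_binomial[OF ind ls(1), of t "int n"] ls assms(2) by simp
  have "\<forall>l\<in>set ls. 0 \<le> ?q l \<and> ?q l \<le> ?p l \<and> ?p l \<le> 1"
  proof
    fix l assume "l \<in> set ls"
    then have [measurable]: "S l \<in> borel_measurable M"
      using ind ls assms(2) unfolding indep_vars_def by auto
    show "0 \<le> ?q l \<and> ?q l \<le> ?p l \<and> ?p l \<le> 1"
      using \<open>s' \<le> s\<close> by (auto intro!: finite_measure_mono)
  qed
  from poisson_binomial_exchange[OF this, of "int n" "int (Suc n)" "int (Suc n)" "int n"]
  show ?thesis unfolding pb by simp
qed

lemma (in prob_space) set_integral_count_exceeding:
  fixes S :: "'i \<Rightarrow> 'a \<Rightarrow> real" and f :: "real \<Rightarrow> real"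
  assumes ind: "indep_vars (\<lambda>_. borel) S I" and "i \<in> I" "L \<subseteq> I" "i \<notin> L" "finite L"
    and [measurable]: "f \<in> borel_measurable borel" and int: "integrable M (\<lambda>\<omega>. f (S i \<omega>))"
  shows "(LINT \<omega>:{\<omega>\<in>space M. card {l\<in>L. S i \<omega> < S l \<omega>} = n}|M. f (S i \<omega>))
           = (\<integral>\<omega>. f (S i \<omega>) * prob_count_exceeding M S L n (S i \<omega>) \<partial>M)"
proof -
  let ?Vi = "\<lambda>\<omega>. restrict (\<lambda>l. S l \<omega>) {i}" and ?Ni = "PiM {i} (\<lambda>_. borel :: real measure)"
  let ?V = "\<lambda>\<omega>. restrict (\<lambda>l. S l \<omega>) L" and ?N = "PiM L (\<lambda>_. borel :: real measure)"
  let ?A = "{\<omega>\<in>space M. card {l\<in>L. S i \<omega> < S l \<omega>} = n}"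
  have indep: "indep_var ?Ni ?Vi ?N ?V"
    using assms by (intro indep_var_restrict[OF ind]) auto
  have [measurable]: "?Vi \<in> measurable M ?Ni" "?V \<in> measurable M ?N"
    using indep_var_rv1[OF indep] indep_var_rv2[OF indep] by auto
  define F where "F = (\<lambda>(x, y). f (x i) * (if card {l\<in>L. x i < y l} = n then 1 else 0 :: real))"
  have [measurable]: "F \<in> borel_measurable (?Ni \<Otimes>\<^sub>M ?N)"
    unfolding F_def using \<open>finite L\<close> by measurable
  have FV: "F (?Vi \<omega>, ?V \<omega>) = indicator ?A \<omega> * f (S i \<omega>)" if "\<omega> \<in> space M" for \<omega>
  proof -
    have "{l\<in>L. s < ?V \<omega> l} = {l\<in>L. s < S l \<omega>}" for s by auto
    moreover have "?Vi \<omega> i = S i \<omega>" by simp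
    ultimately show ?thesis using that by (simp add: F_def split: split_indicator del: restrict_apply)
  qed
  have "(LINT \<omega>:?A|M. f (S i \<omega>)) = (\<integral>\<omega>. F (?Vi \<omega>, ?V \<omega>) \<partial>M)"
    unfolding set_lebesgue_integral_def by (intro Bochner_Integration.integral_cong) (simp_all add: FV)
  also have "\<dots> = (\<integral>\<omega>. (\<integral>y. F (?Vi \<omega>, y) \<partial>distr M ?N ?V) \<partial>M)"
  proof (rule integral_indep_var_eq_iterated[OF indep])
    show "integrable M (\<lambda>\<omega>. F (?Vi \<omega>, ?V \<omega>))"
      using \<open>finite L\<close> \<open>L \<subseteq> I\<close> \<open>i \<in> I\<close>
      by (intro Bochner_Integration.integrable_bound[OF int]) (auto simp: FV split: split_indicator)
  qed measurable
  also have "\<dots> = (\<integral>\<omega>. f (S i \<omega>) * prob_count_exceeding M S L n (S i \<omega>) \<partial>M)"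
  proof -
    have "l \<in> L \<Longrightarrow> S l \<in> borel_measurable M" for l
      using ind \<open>L \<subseteq> I\<close> unfolding indep_vars_def by auto
    then show ?thesis
      by (simp add: F_def prob_count_exceeding_eq_integral[OF \<open>finite L\<close>])
  qed
  finally show ?thesis .
qed

lemma (in prob_space) cond_exp_event_count_exceeding_antimono:
  fixes S :: "'i \<Rightarrow> 'a \<Rightarrow> real"
  assumes ind: "indep_vars (\<lambda>_. borel) S I" and "i \<in> I" "L \<subseteq> I" "i \<notin> L" "finite L"
    and int: "integrable M (S i)"
    and pos: "prob {\<omega>\<in>space M. card {l\<in>L. S i \<omega> < S l \<omega>} = n} > 0"
      "prob {\<omega>\<in>space M. card {l\<in>L. S i \<omega> < S l \<omega>} = Suc n} > 0"
  shows "cond_exp_event M (S i) {\<omega>\<in>space M. card {l\<in>L. S i \<omega> < S l \<omega>} = Suc n}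
           \<le> cond_exp_event M (S i) {\<omega>\<in>space M. card {l\<in>L. S i \<omega> < S l \<omega>} = n}"
proof -
  let ?A = "\<lambda>k. {\<omega>\<in>space M. card {l\<in>L. S i \<omega> < S l \<omega>} = k}" and ?G = "prob_count_exceeding M S L"
  have S[measurable]: "S l \<in> borel_measurable M" if "l \<in> I" for l
    using ind that unfolding indep_vars_def by auto
  have [measurable]: "S l \<in> borel_measurable M" if "l \<in> L" for l
    using that assms(3) by (intro S) auto
  have [measurable]: "?G k \<in> borel_measurable borel" for k
    using assms(5) by (intro borel_measurable_prob_count_exceeding) auto
  have expect: "(LINT \<omega>:?A k|M. S i \<omega>) = (\<integral>\<omega>. S i \<omega> * ?G k (S i \<omega>) \<partial>M)" for k
    using set_integral_count_exceeding[OF assms(1-5), where f = "\<lambda>x. x"] int by simp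
  have prob: "prob (?A k) = (\<integral>\<omega>. ?G k (S i \<omega>) \<partial>M)" for k
  proof -
    have "?A k \<in> events" using assms(2,5) by measurable
    then have "prob (?A k) = (LINT \<omega>:?A k|M. 1)" by (simp add: set_integral_const)
    also have "\<dots> = (\<integral>\<omega>. 1 * ?G k (S i \<omega>) \<partial>M)"
      by (rule set_integral_count_exceeding[OF assms(1-5)]) auto
    finally show ?thesis by simp
  qed
  have "(\<integral>\<omega>. S i \<omega> * ?G (Suc n) (S i \<omega>) \<partial>M) * (\<integral>\<omega>. ?G n (S i \<omega>) \<partial>M)
      \<le> (\<integral>\<omega>. S i \<omega> * ?G n (S i \<omega>) \<partial>M) * (\<integral>\<omega>. ?G (Suc n) (S i \<omega>) \<partial>M)"
  proof (rule chebyshev_TP2)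
    show "(\<lambda>\<omega>. ?G n (S i \<omega>)) \<in> borel_measurable M" "(\<lambda>\<omega>. ?G (Suc n) (S i \<omega>)) \<in> borel_measurable M"
      using assms(2) by measurable
  qed (use int prob_count_exceeding_TP2[OF ind assms(3,5)] in \<open>auto simp: prob_count_exceeding_def\<close>)
  then show ?thesis
    using pos unfolding cond_exp_event_def expect prob by (simp add: divide_simps mult.commute)
qed

theorem theorem2:
  fixes M :: "'a measure" and S :: "nat \<Rightarrow> 'a \<Rightarrow> real" and m i k :: nat
  assumes "prob_space M"
    and "m \<ge> 2"
    and "prob_space.indep_vars M (\<lambda>_. borel) S {1..m}"
    and "\<forall>j\<in>{1..m}. AE \<omega> in M. S j \<omega> \<ge> 0"
    and "\<forall>j\<in>{1..m}. \<exists>f. distributed M lborel (S j) f"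
    and "\<forall>j\<in>{1..m}. integrable M (S j)"
    and "i \<in> {1..m-1}" and "k \<in> {1..m-1}"
    and "measure M {\<omega> \<in> space M. rank m S i \<omega> = k} > 0"
    and "measure M {\<omega> \<in> space M. rank m S i \<omega> = k + 1} > 0"
  shows "cond_exp_event M (S i) {\<omega> \<in> space M. rank m S i \<omega> = k}
           \<ge> cond_exp_event M (S i) {\<omega> \<in> space M. rank m S i \<omega> = k + 1}"
proof -
  interpret prob_space M by fact
  define L where "L = {1..m} - {i}"
  have rank_eq: "rank m S i \<omega> = Suc (card {l\<in>L. S i \<omega> < S l \<omega>})" for \<omega>
    unfolding rank_def L_def by (auto intro!: arg_cong[where f = card])
  obtain n where k: "k = Suc n" using assms(8) by (cases k) auto
  have events: "{\<omega> \<in> space M. rank m S i \<omega> = k} = {\<omega>\<in>space M. card {l\<in>L. S i \<omega> < S l \<omega>} = n}"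
    "{\<omega> \<in> space M. rank m S i \<omega> = k + 1} = {\<omega>\<in>space M. card {l\<in>L. S i \<omega> < S l \<omega>} = Suc n}"
    unfolding rank_eq k by auto
  have "i \<in> {1..m}" "L \<subseteq> {1..m}" "i \<notin> L" "finite L" using assms(7) by (auto simp: L_def)
  moreover have "integrable M (S i)" using assms(6) \<open>i \<in> {1..m}\<close> by blast
  ultimately show ?thesis
    using cond_exp_event_count_exceeding_antimono[OF assms(3)] assms(9,10) unfolding events
    by blast
qed

end
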